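(* Fix a time $t\ge 0$ and an evaluation policy $\pi_e$. Assume (common support) that for all $x,a$, $\pi_e(a\mid x)>0$ implies $\pi_0(a\mid x)>0$, and (conditional independent censoring) that $L$ and $C$ are conditionally independent given $(x,a)$. Let $\hat\pi_0$, $\hat G$, $\hat S$ be fixed (non-random, not depending on $\mathcal{D}$) models of the propensity score, censoring survival function and survival function, with $\hat G(t\mid x,a)>0$ and $\hat\pi_0(a\mid x)>0$ whenever $\pi_e(a\mid x)>0$, and write $\hat w(x,a)=\pi_e(a\mid x)/\hat\pi_0(a\mid x)$. Define $$\hat V_{\mathrm{IPCW\text{-}IPS}}(\pi_e,t;\mathcal{D})=\frac1n\sum_{i=1}^n \hat w(x_i,a_i)\frac{\mathbb{I}\{T_i>t\}}{\hat G(t\mid x_i,a_i)},$$ $$\hat V_{\mathrm{IPCW\text{-}DR}}(\pi_e,t;\mathcal{D})=\frac1n\sum_{i=1}^n\Big(\hat w(x_i,a_i)\Big(\frac{\mathbb{I}\{T_i>t\}}{\hat G(t\mid x_i,a_i)}-\hat S(x_i,a_i,t)\Big)+\sum_{a\in\mathcal{A}}\pi_e(a\mid x_i)\hat S(x_i,a,t)\Big).$$ Suppose the censoring model is correctly specified, $\hat G(t\mid x,a)=G(t\mid x,a)$ for all $x,a$. Then: (1) if the propensity score is correctly specified ($\hat\pi_0=\pi_0$), $\hat V_{\mathrm{IPCW\text{-}IPS}}$ is unbiased for $V(\pi_e,t)$, i.e. $\mathbb{E}_{\mathcal{D}}[\hat V_{\mathrm{IPCW\text{-}IPS}}(\pi_e,t;\mathcal{D})]=V(\pi_e,t)$;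 (2) if either the propensity score is correctly specified ($\hat\pi_0=\pi_0$) or the outcome model is correctly specified ($\hat S(x,a,t)=S(x,a,t)$ for all $x,a$), then $\hat V_{\mathrm{IPCW\text{-}DR}}$ is unbiased for $V(\pi_e,t)$.
   Context: Let $\mathcal{X}$ be a context space and $\mathcal{A}$ a finite action set. A policy $\pi(a\mid x)$ is a conditional distribution over $\mathcal{A}$ given $x$. The logged data $\mathcal{D}=\{(x_i,a_i,T_i,r_i)\}_{i=1}^n$ consists of $n$ i.i.d. draws generated by $(x,a,L,C)\sim p(x)\pi_0(a\mid x)p(L,C\mid x,a)$ for a logging policy $\pi_0$, where $L\ge0$ is the latent survival time, $C\ge0$ the censoring time, and only $T=\min\{L,C\}$ and $r=\mathbb{I}\{L\le C\}$ are observed. Define $S(x,a,t)=P(L>t\mid x,a)$, $G(t\mid x,a)=P(C>t\mid x,a)$, and the policy value $V(\pi_e,t)=\mathbb{E}_{p(x)\pi_e(a\mid x)}[S(x,a,t)]$. *)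

theory Defs
  imports "HOL-Probability.Probability"
begin

text \<open>Contexts live in a measurable space carried by the context distribution p.
  Actions form a finite type 'a.  A policy is a map pi x a = pi(a|x).\<close>

definition is_policy :: "'x measure \<Rightarrow> ('x \<Rightarrow> 'a::finite \<Rightarrow> real) \<Rightarrow> bool" where
  "is_policy p pol \<longleftrightarrow>
     (\<forall>a. (\<lambda>x. pol x a) \<in> borel_measurable p) \<and>
     (\<forall>x\<in>space p. (\<forall>a. 0 \<le> pol x a) \<and> (\<Sum>a\<in>UNIV. pol x a) = 1)"

text \<open>Space of a full sample (x, a, L, C).\<close>
definition sample_space :: "'x measure \<Rightarrow> ('x \<times> 'a \<times> real \<times> real) measure" where
  "sample_space p = p \<Otimes>\<^sub>M count_space UNIV \<Otimes>\<^sub>M (borel :: (real \<times> real) measure)"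

text \<open>Data generating distribution p(x) pi0(a|x) p(L,C|x,a); K x a is the law of (L,C) given (x,a).\<close>
definition gen_dist ::
  "'x measure \<Rightarrow> ('x \<Rightarrow> 'a \<Rightarrow> real) \<Rightarrow> ('x \<Rightarrow> 'a \<Rightarrow> (real \<times> real) measure)
     \<Rightarrow> ('x \<times> 'a \<times> real \<times> real) measure" where
  "gen_dist p pi0 K =
     density (p \<Otimes>\<^sub>M count_space UNIV) (\<lambda>(x,a). ennreal (pi0 x a)) \<bind>
       (\<lambda>(x,a). distr (K x a) (sample_space p) (\<lambda>lc. (x, a, lc)))"

definition data_dist ::
  "nat \<Rightarrow> ('x \<times> 'a \<times> real \<times> real) measure \<Rightarrow> (nat \<Rightarrow> 'x \<times> 'a \<times> real \<times> real) measure" where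
  "data_dist n P = PiM {..<n} (\<lambda>_. P)"

definition surv :: "('x \<Rightarrow> 'a \<Rightarrow> (real \<times> real) measure) \<Rightarrow> 'x \<Rightarrow> 'a \<Rightarrow> real \<Rightarrow> real" where
  "surv K x a t = measure (K x a) {lc. fst lc > t}"

definition cens_surv :: "('x \<Rightarrow> 'a \<Rightarrow> (real \<times> real) measure) \<Rightarrow> real \<Rightarrow> 'x \<Rightarrow> 'a \<Rightarrow> real" where
  "cens_surv K t x a = measure (K x a) {lc. snd lc > t}"

definition policy_value ::
  "'x measure \<Rightarrow> ('x \<Rightarrow> 'a::finite \<Rightarrow> real) \<Rightarrow> ('x \<Rightarrow> 'a \<Rightarrow> (real \<times> real) measure) \<Rightarrow> real \<Rightarrow> real" where
  "policy_value p pie K t = (\<integral>x. (\<Sum>a\<in>UNIV. pie x a * surv K x a t) \<partial>p)"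

definition observe :: "'x \<times> 'a \<times> real \<times> real \<Rightarrow> 'x \<times> 'a \<times> real \<times> real" where
  "observe z = (case z of (x, a, l, c) \<Rightarrow> (x, a, min l c, if l \<le> c then 1 else 0))"

definition wgt :: "('x \<Rightarrow> 'a \<Rightarrow> real) \<Rightarrow> ('x \<Rightarrow> 'a \<Rightarrow> real) \<Rightarrow> 'x \<Rightarrow> 'a \<Rightarrow> real" where
  "wgt pie pi0h x a = pie x a / pi0h x a"

text \<open>Estimators, as functions of the observed data set d i = (x_i, a_i, T_i, r_i), i < n.\<close>
definition V_ipcw_ips ::
  "nat \<Rightarrow> ('x \<Rightarrow> 'a \<Rightarrow> real) \<Rightarrow> ('x \<Rightarrow> 'a \<Rightarrow> real) \<Rightarrow> (real \<Rightarrow> 'x \<Rightarrow> 'a \<Rightarrow> real)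
     \<Rightarrow> real \<Rightarrow> (nat \<Rightarrow> 'x \<times> 'a \<times> real \<times> real) \<Rightarrow> real" where
  "V_ipcw_ips n pie pi0h Gh t d =
     (1 / real n) * (\<Sum>i<n. case d i of (x, a, T, r) \<Rightarrow>
        wgt pie pi0h x a * ((if T > t then 1 else 0) / Gh t x a))"

definition V_ipcw_dr ::
  "nat \<Rightarrow> ('x \<Rightarrow> 'a::finite \<Rightarrow> real) \<Rightarrow> ('x \<Rightarrow> 'a \<Rightarrow> real) \<Rightarrow> (real \<Rightarrow> 'x \<Rightarrow> 'a \<Rightarrow> real)
     \<Rightarrow> ('x \<Rightarrow> 'a \<Rightarrow> real \<Rightarrow> real) \<Rightarrow> real \<Rightarrow> (nat \<Rightarrow> 'x \<times> 'a \<times> real \<times> real) \<Rightarrow> real" where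
  "V_ipcw_dr n pie pi0h Gh Sh t d =
     (1 / real n) * (\<Sum>i<n. case d i of (x, a, T, r) \<Rightarrow>
        wgt pie pi0h x a * ((if T > t then 1 else 0) / Gh t x a - Sh x a t)
        + (\<Sum>b\<in>UNIV. pie x b * Sh x b t))"

end

theory Submission
  imports Defs
begin

(* Given (x, a), independent censoring gives P(T > t | x, a) = S(x,a,t) G(t|x,a), so with the
   correct censoring model the IPCW term I{T > t} / G(t|x,a) has conditional mean S(x,a,t).
   Averaging over a ~ pi0(.|x), the DR summand has conditional mean
     sum_a pi0(a|x) w(x,a) (S - Shat)(x,a,t) + sum_a pie(a|x) Shat(x,a,t),
   which is sum_a pie(a|x) S(x,a,t) as soon as pi0 w = pie or Shat = S; integrating over p gives
   V(pie, t), and the sample mean of n i.i.d. draws has the mean of one draw.  The IPS summand is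
   nonnegative, which is why its unbiasedness needs no integrability hypothesis. *)

lemma integral_sample_mean_PiM:
  fixes f :: "'z \<Rightarrow> real"
  assumes M: "prob_space M" and f: "integrable M f" and n: "n > 0"
  shows "(\<integral>D. (1 / real n) * (\<Sum>i<n. f (D i)) \<partial>PiM {..<n} (\<lambda>_. M)) = integral\<^sup>L M f"
proof -
  have coord: "distr (PiM {..<n} (\<lambda>_. M)) M (\<lambda>D. D i) = M"
    and coord_meas: "(\<lambda>D. D i) \<in> measurable (PiM {..<n} (\<lambda>_. M)) M" if "i < n" for i
    using that by (auto simp: M intro!: distr_PiM_component measurable_component_singleton)
  have "integrable (PiM {..<n} (\<lambda>_. M)) (\<lambda>D. f (D i))" if "i < n" for i
    using f coord[OF that] integrable_distr_eq[OF coord_meas[OF that] borel_measurable_integrable[OF f]]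
    by simp
  moreover have "(\<integral>D. f (D i) \<partial>PiM {..<n} (\<lambda>_. M)) = integral\<^sup>L M f" if "i < n" for i
    using integral_distr[OF coord_meas[OF that] borel_measurable_integrable[OF f]] coord[OF that]
    by simp
  ultimately show ?thesis
    using n by (simp add: integral_sum)
qed

(* Fubini for the split {..<n} = {1..<n} \<union> {0}: almost every section in the coordinate 0 is
   integrable, and such a section differs from f (x 0) / n by a constant. *)
lemma integrable_of_integrable_sample_mean_PiM:
  fixes f :: "'z \<Rightarrow> real"
  assumes M: "prob_space M" and n: "n > 0"
    and F: "integrable (PiM {..<n} (\<lambda>_. M)) (\<lambda>D. (1 / real n) * (\<Sum>i<n. f (D i)))"
  shows "integrable M f"
proof -
  interpret product_prob_space "\<lambda>_::nat. M" UNIV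
    by (rule product_prob_spaceI) (simp add: M)
  define J where "J = {1..<n}"
  define I where "I = {0::nat}"
  interpret J: prob_space "PiM J (\<lambda>_. M)" by (rule prob_space_PiM) (simp add: M)
  interpret I: prob_space "PiM I (\<lambda>_. M)" by (rule prob_space_PiM) (simp add: M)
  interpret JI: pair_sigma_finite "PiM J (\<lambda>_. M)" "PiM I (\<lambda>_. M)" ..
  have JI: "J \<union> I = {..<n}" "J \<inter> I = {}" using n by (auto simp: I_def J_def)
  let ?F = "\<lambda>D. (1 / real n) * (\<Sum>i<n. f (D i))"
  have "integrable (distr (PiM J (\<lambda>_. M) \<Otimes>\<^sub>M PiM I (\<lambda>_. M)) (PiM {..<n} (\<lambda>_. M)) (merge J I)) ?F"
    using F distr_merge[OF JI(2)] JI(1) by (simp add: I_def J_def)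
  then have "integrable (PiM J (\<lambda>_. M) \<Otimes>\<^sub>M PiM I (\<lambda>_. M)) (\<lambda>y. ?F (merge J I y))"
    using F JI(1) by (subst (asm) integrable_distr_eq) (auto intro: measurable_merge[of J I, simplified JI(1)])
  then have "AE y in PiM J (\<lambda>_. M). integrable (PiM I (\<lambda>_. M)) (\<lambda>x. ?F (merge J I (y, x)))"
    by (rule JI.AE_integrable_fst')
  then obtain y where y: "integrable (PiM I (\<lambda>_. M)) (\<lambda>x. ?F (merge J I (y, x)))"
    using J.AE_False by (metis (mono_tags, lifting) eventually_mono)
  define c where "c = (\<Sum>i\<in>J. f (y i))"
  have section_eq: "?F (merge J I (y, x)) = (f (x 0) + c) / real n" for x
  proof -
    have "(\<Sum>i<n. f (merge J I (y, x) i)) = (\<Sum>i\<in>J. f (merge J I (y, x) i)) + (\<Sum>i\<in>I. f (merge J I (y, x) i))"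
      by (simp add: JI(1)[symmetric] sum.union_disjoint[OF _ _ JI(2)] I_def J_def)
    then show ?thesis by (simp add: merge_def I_def J_def c_def)
  qed
  from y have "integrable (PiM I (\<lambda>_. M)) (\<lambda>x. (f (x 0) + c) / real n)"
    unfolding section_eq .
  then have "integrable (PiM I (\<lambda>_. M)) (\<lambda>x. (f (x 0) + c) / real n * real n - c)"
    by (intro Bochner_Integration.integrable_diff integrable_mult_left I.integrable_const)
  then have f0: "integrable (PiM I (\<lambda>_. M)) (\<lambda>x. f (x 0))"
    using n by simp
  have coord: "(\<lambda>x. x 0) \<in> measurable (PiM I (\<lambda>_. M)) M"
    by (rule measurable_component_singleton) (simp add: I_def)
  have "(\<lambda>z. \<lambda>i\<in>I. z) \<in> measurable M (PiM I (\<lambda>_. M))"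
    by (rule measurable_restrict) simp
  from measurable_compose[OF this borel_measurable_integrable[OF f0]]
  have "f \<in> borel_measurable M" by (simp add: I_def)
  moreover have "distr (PiM I (\<lambda>_. M)) M (\<lambda>x. x 0) = M"
    by (rule distr_PiM_component) (simp_all add: M I_def)
  ultimately show ?thesis
    using f0 integrable_distr_eq[OF coord] by metis
qed

lemma measurable_action_sections:
  fixes f :: "'x \<Rightarrow> 'a::countable \<Rightarrow> 'l \<Rightarrow> 'b"
  assumes "\<And>a. (\<lambda>(x, l). f x a l) \<in> measurable (M \<Otimes>\<^sub>M L) N"
  shows "(\<lambda>(x, a, l). f x a l) \<in> measurable (M \<Otimes>\<^sub>M count_space UNIV \<Otimes>\<^sub>M L) N"
proof -
  have "(\<lambda>z. (\<lambda>a z. f (fst z) a (snd (snd z))) (fst (snd z)) z)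
      \<in> measurable (M \<Otimes>\<^sub>M count_space UNIV \<Otimes>\<^sub>M L) N"
  proof (rule measurable_compose_countable)
    fix a
    have "(\<lambda>z. (fst z, snd (snd z))) \<in> measurable (M \<Otimes>\<^sub>M count_space UNIV \<Otimes>\<^sub>M L) (M \<Otimes>\<^sub>M L)"
      by measurable
    from measurable_compose[OF this assms[of a]]
    show "(\<lambda>z. f (fst z) a (snd (snd z))) \<in> measurable (M \<Otimes>\<^sub>M count_space UNIV \<Otimes>\<^sub>M L) N"
      by (simp add: case_prod_beta')
  qed measurable
  then show ?thesis by (simp add: case_prod_beta')
qed

locale logging_model =
  fixes p :: "'x measure" and pi0 :: "'x \<Rightarrow> 'a::finite \<Rightarrow> real"
    and K :: "'x \<Rightarrow> 'a \<Rightarrow> (real \<times> real) measure"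
  assumes p_prob: "prob_space p"
    and pi0_policy: "is_policy p pi0"
    and K_kernel: "(\<lambda>(x, a). K x a) \<in> measurable (p \<Otimes>\<^sub>M count_space UNIV) (prob_algebra borel)"
begin

abbreviation P :: "('x \<times> 'a \<times> real \<times> real) measure" where
  "P \<equiv> gen_dist p pi0 K"

lemma pi0_measurable[measurable]: "(\<lambda>x. pi0 x a) \<in> borel_measurable p"
  and pi0_nonneg: "x \<in> space p \<Longrightarrow> 0 \<le> pi0 x a"
  and sum_pi0: "x \<in> space p \<Longrightarrow> (\<Sum>a\<in>UNIV. pi0 x a) = 1"
  using pi0_policy unfolding is_policy_def by auto

lemma K_prob_space: "x \<in> space p \<Longrightarrow> prob_space (K x a)"
  and sets_K: "x \<in> space p \<Longrightarrow> sets (K x a) = sets borel"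
  using measurable_space[OF K_kernel, of "(x, a)"] by (auto simp: space_pair_measure space_prob_algebra)

lemma K_subprob_measurable: "(\<lambda>(x, a). K x a) \<in> measurable (p \<Otimes>\<^sub>M count_space UNIV) (subprob_algebra borel)"
  using measurable_prob_algebraD[OF K_kernel] .

lemma K_section_measurable[measurable]: "(\<lambda>x. K x a) \<in> measurable p (subprob_algebra borel)"
  using measurable_compose[OF _ K_subprob_measurable, of "\<lambda>x. (x, a)"] by simp

lemma space_sample_space: "space (sample_space p) = space p \<times> UNIV"
  by (simp add: sample_space_def space_pair_measure)

lemma nn_integral_gen_dist:
  assumes h[measurable]: "h \<in> borel_measurable (sample_space p)"
  shows "(\<integral>\<^sup>+z. h z \<partial>P)
    = (\<integral>\<^sup>+x. (\<Sum>a\<in>UNIV. ennreal (pi0 x a) * (\<integral>\<^sup>+lc. h (x, a, lc) \<partial>K x a)) \<partial>p)"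
proof -
  let ?A = "count_space (UNIV :: 'a set)"
  let ?L = "\<lambda>(x, a). distr (K x a) (sample_space p) (\<lambda>lc. (x, a, lc))"
  interpret A: sigma_finite_measure ?A
    by (rule sigma_finite_measure_count_space_finite) simp
  have reassoc: "(\<lambda>(y, lc). (fst y, snd y, lc)) \<in> measurable ((p \<Otimes>\<^sub>M ?A) \<Otimes>\<^sub>M borel) (sample_space p)"
    unfolding sample_space_def by measurable
  from measurable_distr2[OF reassoc K_subprob_measurable[unfolded case_prod_beta']]
  have L: "?L \<in> measurable (p \<Otimes>\<^sub>M ?A) (subprob_algebra (sample_space p))"
    by (simp add: case_prod_beta')
  have "(\<lambda>(y, lc). h (fst y, snd y, lc)) \<in> borel_measurable ((p \<Otimes>\<^sub>M ?A) \<Otimes>\<^sub>M borel)"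
    using measurable_compose[OF reassoc h] by (simp add: case_prod_beta')
  from nn_integral_measurable_subprob_algebra2[OF this K_subprob_measurable[unfolded case_prod_beta']]
  have "(\<lambda>y. \<integral>\<^sup>+lc. h (fst y, snd y, lc) \<partial>K (fst y) (snd y)) \<in> borel_measurable (p \<Otimes>\<^sub>M ?A)" .
  moreover have "(\<lambda>y. pi0 (fst y) (snd y)) \<in> borel_measurable (p \<Otimes>\<^sub>M ?A)"
    using measurable_compose_countable[of "\<lambda>a y. pi0 (fst y) a" "p \<Otimes>\<^sub>M ?A" borel snd] by simp
  ultimately have integrand_measurable:
    "(\<lambda>(x, a). ennreal (pi0 x a) * (\<integral>\<^sup>+lc. h (x, a, lc) \<partial>K x a)) \<in> borel_measurable (p \<Otimes>\<^sub>M ?A)"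
    by (simp add: case_prod_beta')
  have "(\<integral>\<^sup>+z. h z \<partial>P)
      = (\<integral>\<^sup>+y. (\<integral>\<^sup>+z. h z \<partial>?L y) \<partial>density (p \<Otimes>\<^sub>M ?A) (\<lambda>(x, a). ennreal (pi0 x a)))"
    unfolding gen_dist_def using L by (intro nn_integral_bind[OF h]) simp
  also have "\<dots> = (\<integral>\<^sup>+(x, a). ennreal (pi0 x a) * (\<integral>\<^sup>+lc. h (x, a, lc) \<partial>K x a) \<partial>(p \<Otimes>\<^sub>M ?A))"
  proof (subst nn_integral_density)
    have "(\<lambda>lc. (x, a, lc)) \<in> measurable (K x a) (sample_space p)" if "x \<in> space p" for x a
      using that by (simp add: measurable_cong_sets[OF sets_K refl] sample_space_def)
    then show "(\<integral>\<^sup>+y. (\<lambda>(x, a). ennreal (pi0 x a)) y * (\<integral>\<^sup>+z. h z \<partial>?L y) \<partial>(p \<Otimes>\<^sub>M ?A))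
        = (\<integral>\<^sup>+(x, a). ennreal (pi0 x a) * (\<integral>\<^sup>+lc. h (x, a, lc) \<partial>K x a) \<partial>(p \<Otimes>\<^sub>M ?A))"
      by (intro nn_integral_cong) (auto simp: space_pair_measure nn_integral_distr)
  qed (auto intro!: measurable_compose[OF L nn_integral_measurable_subprob_algebra[OF h]])
  also have "\<dots> = (\<integral>\<^sup>+x. (\<integral>\<^sup>+a. ennreal (pi0 x a) * (\<integral>\<^sup>+lc. h (x, a, lc) \<partial>K x a) \<partial>?A) \<partial>p)"
    using A.nn_integral_fst[OF integrand_measurable] by simp
  finally show ?thesis
    by (simp add: nn_integral_count_space_finite)
qed

lemma sets_gen_dist[measurable_cong]: "sets P = sets (sample_space p)"
proof -
  have "space (density (p \<Otimes>\<^sub>M count_space UNIV) (\<lambda>(x, a). ennreal (pi0 x a))) \<noteq> {}"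
    using prob_space.not_empty[OF p_prob] by (simp add: space_pair_measure)
  then show ?thesis
    unfolding gen_dist_def by (intro sets_bind) (auto simp: case_prod_beta')
qed

lemma fst_measurable_gen_dist: "fst \<in> measurable P p"
  by (simp add: measurable_cong_sets[OF sets_gen_dist refl] sample_space_def)

lemma distr_gen_dist_fst: "distr P p fst = p"
proof (rule measure_eqI)
  show "sets (distr P p fst) = sets p"
    by simp
  fix A assume A: "A \<in> sets (distr P p fst)"
  then have "emeasure (distr P p fst) A = (\<integral>\<^sup>+z. indicator A (fst z) \<partial>P)"
    using fst_measurable_gen_dist
    by (simp add: nn_integral_indicator[symmetric] nn_integral_distr del: nn_integral_indicator)
  also have "\<dots> = (\<integral>\<^sup>+x. (\<Sum>a\<in>UNIV. ennreal (pi0 x a)) * indicator A x \<partial>p)"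
    using A by (subst nn_integral_gen_dist) (auto simp: sample_space_def sum_distrib_right
      prob_space.emeasure_space_1[OF K_prob_space] intro!: nn_integral_cong)
  also have "\<dots> = (\<integral>\<^sup>+x. indicator A x \<partial>p)"
    by (intro nn_integral_cong) (simp add: pi0_nonneg sum_pi0)
  finally show "emeasure (distr P p fst) A = emeasure p A"
    using A by simp
qed

lemma prob_space_gen_dist: "prob_space P"
  using prob_space_distrD[OF fst_measurable_gen_dist] p_prob by (simp add: distr_gen_dist_fst)

lemma nn_integral_gen_dist_kernel_mean:
  fixes h :: "'x \<times> 'a \<times> real \<times> real \<Rightarrow> real"
  assumes h[measurable]: "h \<in> borel_measurable (sample_space p)"
    and nonneg: "\<And>x a lc. x \<in> space p \<Longrightarrow> 0 \<le> h (x, a, lc)"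
    and kernel_integrable: "\<And>x a. x \<in> space p \<Longrightarrow> integrable (K x a) (\<lambda>lc. h (x, a, lc))"
  shows "(\<integral>\<^sup>+z. h z \<partial>P) = (\<integral>\<^sup>+x. (\<Sum>a\<in>UNIV. pi0 x a * (\<integral>lc. h (x, a, lc) \<partial>K x a)) \<partial>p)"
proof (subst nn_integral_gen_dist, simp, intro nn_integral_cong)
  fix x assume x: "x \<in> space p"
  have "(\<integral>\<^sup>+lc. h (x, a, lc) \<partial>K x a) = (\<integral>lc. h (x, a, lc) \<partial>K x a)" for a
    using x by (intro nn_integral_eq_integral kernel_integrable AE_I2 nonneg)
  moreover have "0 \<le> pi0 x a * (\<integral>lc. h (x, a, lc) \<partial>K x a)" for a
    using x by (intro mult_nonneg_nonneg pi0_nonneg integral_nonneg_AE AE_I2 nonneg)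
  moreover have "ennreal (pi0 x a) * ennreal (\<integral>lc. h (x, a, lc) \<partial>K x a)
      = ennreal (pi0 x a * (\<integral>lc. h (x, a, lc) \<partial>K x a))" for a
    using x by (simp add: ennreal_mult' pi0_nonneg)
  ultimately show "(\<Sum>a\<in>UNIV. ennreal (pi0 x a) * (\<integral>\<^sup>+lc. h (x, a, lc) \<partial>K x a))
      = ennreal (\<Sum>a\<in>UNIV. pi0 x a * (\<integral>lc. h (x, a, lc) \<partial>K x a))"
    by simp
qed

lemma integral_gen_dist_nonneg:
  fixes h :: "'x \<times> 'a \<times> real \<times> real \<Rightarrow> real"
  assumes h[measurable]: "h \<in> borel_measurable (sample_space p)"
    and nonneg: "\<And>x a lc. x \<in> space p \<Longrightarrow> 0 \<le> h (x, a, lc)"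
    and kernel_integrable: "\<And>x a. x \<in> space p \<Longrightarrow> integrable (K x a) (\<lambda>lc. h (x, a, lc))"
    and g: "integrable p g"
    and kernel_mean: "\<And>x. x \<in> space p \<Longrightarrow> (\<Sum>a\<in>UNIV. pi0 x a * (\<integral>lc. h (x, a, lc) \<partial>K x a)) = g x"
  shows "integrable P h" and "integral\<^sup>L P h = integral\<^sup>L p g"
proof -
  have g_nonneg: "0 \<le> g x" if "x \<in> space p" for x
    using that unfolding kernel_mean[OF that, symmetric]
    by (intro sum_nonneg mult_nonneg_nonneg pi0_nonneg integral_nonneg_AE AE_I2 nonneg)
  have "(\<integral>\<^sup>+z. h z \<partial>P) = (\<integral>\<^sup>+x. g x \<partial>p)"
    using nn_integral_gen_dist_kernel_mean[OF h nonneg kernel_integrable]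
    by (simp add: kernel_mean cong: nn_integral_cong)
  also have "\<dots> = ennreal (integral\<^sup>L p g)"
    using g g_nonneg by (intro nn_integral_eq_integral AE_I2)
  finally have nn: "(\<integral>\<^sup>+z. h z \<partial>P) = ennreal (integral\<^sup>L p g)" .
  have h_nonneg: "AE z in P. 0 \<le> h z"
    using nonneg by (intro AE_I2) (auto simp: sets_eq_imp_space_eq[OF sets_gen_dist] space_sample_space)
  show "integrable P h"
    using nn h_nonneg by (intro integrableI_nonneg) auto
  have "integral\<^sup>L P h = enn2real (\<integral>\<^sup>+z. h z \<partial>P)"
    using h_nonneg by (intro integral_eq_nn_integral) auto
  then show "integral\<^sup>L P h = integral\<^sup>L p g"
    using nn g_nonneg by (simp add: integral_nonneg_AE)
qed

(* Only the positive and negative parts of h are integrated, via nn_integral_gen_dist, so the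
   kernel means need not be measurable in x. *)
lemma integral_gen_dist_eq_0:
  fixes h :: "'x \<times> 'a \<times> real \<times> real \<Rightarrow> real"
  assumes h: "integrable P h"
    and kernel_integrable: "\<And>x a. x \<in> space p \<Longrightarrow> integrable (K x a) (\<lambda>lc. h (x, a, lc))"
    and kernel_mean: "\<And>x. x \<in> space p \<Longrightarrow> (\<Sum>a\<in>UNIV. pi0 x a * (\<integral>lc. h (x, a, lc) \<partial>K x a)) = 0"
  shows "integral\<^sup>L P h = 0"
proof -
  have [measurable]: "h \<in> borel_measurable (sample_space p)"
    using borel_measurable_integrable[OF h] by (simp add: measurable_cong_sets[OF sets_gen_dist refl])
  have pos: "(\<integral>\<^sup>+z. max (h z) 0 \<partial>P)
      = (\<integral>\<^sup>+x. (\<Sum>a\<in>UNIV. pi0 x a * (\<integral>lc. max (h (x, a, lc)) 0 \<partial>K x a)) \<partial>p)"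
    and neg: "(\<integral>\<^sup>+z. max (- h z) 0 \<partial>P)
      = (\<integral>\<^sup>+x. (\<Sum>a\<in>UNIV. pi0 x a * (\<integral>lc. max (- h (x, a, lc)) 0 \<partial>K x a)) \<partial>p)"
    using nn_integral_gen_dist_kernel_mean[of "\<lambda>z. max (h z) 0"]
      nn_integral_gen_dist_kernel_mean[of "\<lambda>z. max (- h z) 0"]
    by (simp_all add: kernel_integrable)
  have "(\<integral>\<^sup>+z. max (h z) 0 \<partial>P) = (\<integral>\<^sup>+z. max (- h z) 0 \<partial>P)"
  proof (unfold pos neg, intro nn_integral_cong arg_cong[where f=ennreal])
    fix x assume x: "x \<in> space p"
    have "(\<integral>lc. max (h (x, a, lc)) 0 \<partial>K x a) - (\<integral>lc. max (- h (x, a, lc)) 0 \<partial>K x a)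
        = (\<integral>lc. h (x, a, lc) \<partial>K x a)" for a
    proof -
      have "integrable (K x a) (\<lambda>lc. max (h (x, a, lc)) 0)" "integrable (K x a) (\<lambda>lc. max (- h (x, a, lc)) 0)"
        using kernel_integrable[OF x] by auto
      from Bochner_Integration.integral_diff[OF this]
      show ?thesis
        by (simp add: max_def if_distrib if_distribR cong: if_cong)
    qed
    then have "(\<Sum>a\<in>UNIV. pi0 x a * (\<integral>lc. max (h (x, a, lc)) 0 \<partial>K x a))
        - (\<Sum>a\<in>UNIV. pi0 x a * (\<integral>lc. max (- h (x, a, lc)) 0 \<partial>K x a)) = 0"
      by (simp only: sum_subtractf[symmetric] right_diff_distrib[symmetric] kernel_mean[OF x])
    then show "(\<Sum>a\<in>UNIV. pi0 x a * (\<integral>lc. max (h (x, a, lc)) 0 \<partial>K x a))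
        = (\<Sum>a\<in>UNIV. pi0 x a * (\<integral>lc. max (- h (x, a, lc)) 0 \<partial>K x a))"
      by simp
  qed
  then show ?thesis
    using real_lebesgue_integral_def[OF h] by simp
qed

end

lemma sum_doubly_robust:
  fixes q r w s s' :: "'a \<Rightarrow> real"
  assumes "sum q A = 1" and "(\<forall>a\<in>A. q a * w a = r a) \<or> (\<forall>a\<in>A. s' a = s a)"
  shows "(\<Sum>a\<in>A. q a * (w a * (s a - s' a) + (\<Sum>b\<in>A. r b * s' b))) = (\<Sum>a\<in>A. r a * s a)"
proof -
  have "(\<Sum>a\<in>A. q a * (w a * (s a - s' a) + (\<Sum>b\<in>A. r b * s' b)))
      = (\<Sum>a\<in>A. q a * w a * (s a - s' a)) + (\<Sum>b\<in>A. r b * s' b)"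
    using assms(1) by (simp add: distrib_left sum.distrib mult.assoc sum_distrib_right[symmetric])
  also have "\<dots> = (\<Sum>a\<in>A. r a * s a)"
    using assms(2) by (auto simp: right_diff_distrib sum_subtractf)
  finally show ?thesis .
qed

(* The fitted models pi0h, Gh and Sh are arbitrary functions, not assumed measurable: the IPS
   summand becomes measurable under the correct propensity model, and for DR measurability is
   part of the integrability hypothesis. *)
locale ipcw_model = logging_model p pi0 K
  for p :: "'x measure" and pi0 :: "'x \<Rightarrow> 'a::finite \<Rightarrow> real" and K +
  fixes pie pi0h :: "'x \<Rightarrow> 'a \<Rightarrow> real" and Gh :: "real \<Rightarrow> 'x \<Rightarrow> 'a \<Rightarrow> real"
    and Sh :: "'x \<Rightarrow> 'a \<Rightarrow> real \<Rightarrow> real" and t :: real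
  assumes pie_policy: "is_policy p pie"
    and support: "\<forall>x\<in>space p. \<forall>a. pie x a > 0 \<longrightarrow> pi0 x a > 0"
    and cond_indep: "\<forall>x\<in>space p. \<forall>a. \<forall>A\<in>sets borel. \<forall>B\<in>sets borel.
         measure (K x a) (A \<times> B) = measure (K x a) (A \<times> UNIV) * measure (K x a) (UNIV \<times> B)"
    and models_pos: "\<forall>x\<in>space p. \<forall>a. pie x a > 0 \<longrightarrow> Gh t x a > 0 \<and> pi0h x a > 0"
    and cens_correct: "\<forall>x\<in>space p. \<forall>a. Gh t x a = cens_surv K t x a"
begin

abbreviation S :: "'x \<Rightarrow> 'a \<Rightarrow> real" where
  "S x a \<equiv> surv K x a t"

abbreviation G :: "'x \<Rightarrow> 'a \<Rightarrow> real" where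
  "G x a \<equiv> cens_surv K t x a"

abbreviation w :: "'x \<Rightarrow> 'a \<Rightarrow> real" where
  "w \<equiv> wgt pie pi0h"

lemma pie_measurable[measurable]: "(\<lambda>x. pie x a) \<in> borel_measurable p"
  and pie_nonneg: "x \<in> space p \<Longrightarrow> 0 \<le> pie x a"
  and sum_pie: "x \<in> space p \<Longrightarrow> (\<Sum>a\<in>UNIV. pie x a) = 1"
  using pie_policy unfolding is_policy_def by auto

lemma surv_measurable[measurable]: "(\<lambda>x. S x a) \<in> borel_measurable p"
  unfolding surv_def
  by (rule measurable_compose[OF K_section_measurable measurable_measure_subprob_algebra])
    (intro borel_open open_Collect_less continuous_intros)

lemma cens_surv_measurable[measurable]: "(\<lambda>x. G x a) \<in> borel_measurable p"
  unfolding cens_surv_def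
  by (rule measurable_compose[OF K_section_measurable measurable_measure_subprob_algebra])
    (intro borel_open open_Collect_less continuous_intros)

lemma surv_nonneg: "0 \<le> S x a" and surv_le_1: "x \<in> space p \<Longrightarrow> S x a \<le> 1"
  unfolding surv_def by (simp_all add: prob_space.prob_le_1[OF K_prob_space])

lemma T_gt_borel[measurable]: "({t<..} \<times> {t<..} :: (real \<times> real) set) \<in> sets borel"
  by (simp add: borel_Times)

(* For a sample (x, a, l, c), the event T = min l c > t is (l, c) \<in> {t<..} \<times> {t<..}. *)
lemma measure_T_gt:
  assumes x: "x \<in> space p"
  shows "measure (K x a) ({t<..} \<times> {t<..}) = S x a * G x a"
proof -
  have "{lc :: real \<times> real. t < fst lc} = {t<..} \<times> UNIV"
    and "{lc :: real \<times> real. t < snd lc} = UNIV \<times> {t<..}"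
    by auto
  moreover have "measure (K x a) ({t<..} \<times> {t<..})
      = measure (K x a) ({t<..} \<times> UNIV) * measure (K x a) (UNIV \<times> {t<..})"
    using cond_indep x by (meson borel_open open_greaterThan)
  ultimately show ?thesis
    by (simp add: surv_def cens_surv_def)
qed

lemma pie_eq_0_or_pos:
  "x \<in> space p \<Longrightarrow> pie x a = 0 \<or> (0 < pie x a \<and> 0 < pi0 x a \<and> 0 < pi0h x a \<and> 0 < G x a)"
  using pie_nonneg[of x a] support models_pos cens_correct by (metis order_less_le)

lemma pi0_mult_wgt: "x \<in> space p \<Longrightarrow> pi0h x a = pi0 x a \<Longrightarrow> pi0 x a * w x a = pie x a"
  using pie_eq_0_or_pos[of x a] by (auto simp: wgt_def)

definition ips_term :: "'x \<times> 'a \<times> real \<times> real \<Rightarrow> real" where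
  "ips_term z = (case observe z of (x, a, T, r) \<Rightarrow> w x a * ((if T > t then 1 else 0) / Gh t x a))"

definition dr_term :: "'x \<times> 'a \<times> real \<times> real \<Rightarrow> real" where
  "dr_term z = (case observe z of (x, a, T, r) \<Rightarrow>
     w x a * ((if T > t then 1 else 0) / Gh t x a - Sh x a t) + (\<Sum>b\<in>UNIV. pie x b * Sh x b t))"

lemma V_ipcw_ips_observe:
  "V_ipcw_ips n pie pi0h Gh t (\<lambda>i. observe (D i)) = 1 / real n * (\<Sum>i<n. ips_term (D i))"
  unfolding V_ipcw_ips_def ips_term_def by simp

lemma V_ipcw_dr_observe:
  "V_ipcw_dr n pie pi0h Gh Sh t (\<lambda>i. observe (D i)) = 1 / real n * (\<Sum>i<n. dr_term (D i))"
  unfolding V_ipcw_dr_def dr_term_def by simp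

lemma ips_term_eq: "ips_term (x, a, lc) = w x a / Gh t x a * indicator ({t<..} \<times> {t<..}) lc"
  by (cases lc) (simp add: ips_term_def observe_def indicator_def)

lemma dr_term_eq:
  "dr_term (x, a, lc) = ips_term (x, a, lc) - w x a * Sh x a t + (\<Sum>b\<in>UNIV. pie x b * Sh x b t)"
  by (cases lc) (simp add: dr_term_def ips_term_def observe_def right_diff_distrib)

lemma kernel_mean_ips_term:
  assumes x: "x \<in> space p"
  shows "integrable (K x a) (\<lambda>lc. ips_term (x, a, lc))"
    and "(\<integral>lc. ips_term (x, a, lc) \<partial>K x a) = w x a * S x a"
proof -
  interpret prob_space "K x a"
    by (rule K_prob_space[OF x])
  have T_gt: "{t<..} \<times> {t<..} \<in> sets (K x a)"
    using sets_K[OF x] by simp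
  then show "integrable (K x a) (\<lambda>lc. ips_term (x, a, lc))"
    unfolding ips_term_eq
    by (intro integrable_mult_right integrable_real_indicator) (simp_all add: less_top[symmetric])
  have "(\<integral>lc. ips_term (x, a, lc) \<partial>K x a) = w x a / Gh t x a * (S x a * G x a)"
    unfolding ips_term_eq using T_gt measure_T_gt[OF x] by simp
  also have "\<dots> = w x a * S x a"
    using pie_eq_0_or_pos[OF x, of a] cens_correct x by (auto simp: wgt_def)
  finally show "(\<integral>lc. ips_term (x, a, lc) \<partial>K x a) = w x a * S x a" .
qed

lemma kernel_mean_dr_term:
  assumes x: "x \<in> space p"
  shows "integrable (K x a) (\<lambda>lc. dr_term (x, a, lc))"
    and "(\<integral>lc. dr_term (x, a, lc) \<partial>K x a)
      = w x a * (S x a - Sh x a t) + (\<Sum>b\<in>UNIV. pie x b * Sh x b t)"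
proof -
  interpret prob_space "K x a"
    by (rule K_prob_space[OF x])
  show "integrable (K x a) (\<lambda>lc. dr_term (x, a, lc))"
    unfolding dr_term_eq using kernel_mean_ips_term(1)[OF x] by simp
  then show "(\<integral>lc. dr_term (x, a, lc) \<partial>K x a)
      = w x a * (S x a - Sh x a t) + (\<Sum>b\<in>UNIV. pie x b * Sh x b t)"
    unfolding dr_term_eq using kernel_mean_ips_term[OF x] prob_space by (simp add: right_diff_distrib)
qed

lemma integrable_policy_value_integrand: "integrable p (\<lambda>x. \<Sum>a\<in>UNIV. pie x a * S x a)"
proof (rule finite_measure.integrable_const_bound[where B=1])
  show "finite_measure p"
    using p_prob by (simp add: prob_space_def)
  have "\<bar>\<Sum>a\<in>UNIV. pie x a * S x a\<bar> \<le> (\<Sum>a\<in>UNIV. pie x a)" if "x \<in> space p" for x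
    using that pie_nonneg surv_nonneg surv_le_1
    by (simp add: sum_nonneg sum_mono mult_left_le)
  then show "AE x in p. norm (\<Sum>a\<in>UNIV. pie x a * S x a) \<le> 1"
    by (intro AE_I2) (simp add: sum_pie)
qed measurable

lemma ips_term_unbiased:
  assumes propensity_correct: "\<forall>x\<in>space p. \<forall>a. pi0h x a = pi0 x a"
  shows "integrable P ips_term" and "integral\<^sup>L P ips_term = policy_value p pie K t"
proof -
  define f where "f x a lc = pie x a / pi0 x a / G x a * indicator ({t<..} \<times> {t<..}) lc" for x a lc
  have "(\<lambda>(x, a, lc). f x a lc) \<in> borel_measurable (sample_space p)"
    unfolding sample_space_def
    by (rule measurable_action_sections) (simp add: f_def case_prod_beta')
  then have measurable: "ips_term \<in> borel_measurable (sample_space p)"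
    by (rule measurable_cong[THEN iffD1, rotated])
      (auto simp: space_sample_space ips_term_eq f_def wgt_def propensity_correct cens_correct)
  have nonneg: "0 \<le> ips_term (x, a, lc)" if "x \<in> space p" for x a lc
    using pie_eq_0_or_pos[OF that, of a] cens_correct that by (auto simp: ips_term_eq wgt_def)
  have kernel_mean:
    "(\<Sum>a\<in>UNIV. pi0 x a * (\<integral>lc. ips_term (x, a, lc) \<partial>K x a)) = (\<Sum>a\<in>UNIV. pie x a * S x a)"
    if "x \<in> space p" for x
    using that propensity_correct by (simp add: kernel_mean_ips_term mult.assoc[symmetric] pi0_mult_wgt)
  show "integrable P ips_term" and "integral\<^sup>L P ips_term = policy_value p pie K t"
    using integral_gen_dist_nonneg[OF measurable nonneg kernel_mean_ips_term(1)
        integrable_policy_value_integrand kernel_mean]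
    unfolding policy_value_def by blast+
qed

lemma dr_term_unbiased:
  assumes model_correct:
      "(\<forall>x\<in>space p. \<forall>a. pi0h x a = pi0 x a) \<or> (\<forall>x\<in>space p. \<forall>a. Sh x a t = S x a)"
    and integrable: "integrable P dr_term"
  shows "integral\<^sup>L P dr_term = policy_value p pie K t"
proof -
  let ?V = "\<lambda>x. \<Sum>a\<in>UNIV. pie x a * S x a"
  have V: "integrable P (\<lambda>z. ?V (fst z))" "integral\<^sup>L P (\<lambda>z. ?V (fst z)) = policy_value p pie K t"
  proof -
    have "?V \<in> borel_measurable p"
      by measurable
    from integrable_distr_eq[OF fst_measurable_gen_dist this]
      integral_distr[OF fst_measurable_gen_dist this]
    show "integrable P (\<lambda>z. ?V (fst z))" "integral\<^sup>L P (\<lambda>z. ?V (fst z)) = policy_value p pie K t"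
      using integrable_policy_value_integrand by (simp_all add: distr_gen_dist_fst policy_value_def)
  qed
  have "integral\<^sup>L P (\<lambda>z. dr_term z - ?V (fst z)) = 0"
  proof (rule integral_gen_dist_eq_0)
    show "integrable P (\<lambda>z. dr_term z - ?V (fst z))"
      using integrable V(1) by simp
    fix x assume x: "x \<in> space p"
    interpret prob_space "K x a" for a
      by (rule K_prob_space[OF x])
    show "integrable (K x a) (\<lambda>lc. dr_term (x, a, lc) - ?V (fst (x, a, lc)))" for a
      using kernel_mean_dr_term(1)[OF x] by simp
    let ?m = "\<lambda>a. w x a * (S x a - Sh x a t) + (\<Sum>b\<in>UNIV. pie x b * Sh x b t)"
    have "(\<integral>lc. dr_term (x, a, lc) - ?V (fst (x, a, lc)) \<partial>K x a) = ?m a - ?V x" for a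
      using kernel_mean_dr_term[OF x] prob_space by simp
    then have "(\<Sum>a\<in>UNIV. pi0 x a * (\<integral>lc. dr_term (x, a, lc) - ?V (fst (x, a, lc)) \<partial>K x a))
        = (\<Sum>a\<in>UNIV. pi0 x a * ?m a) - (\<Sum>a\<in>UNIV. pi0 x a) * ?V x"
      by (simp add: right_diff_distrib sum_subtractf sum_distrib_right)
    also have "\<dots> = 0"
      using model_correct x by (subst sum_doubly_robust) (auto simp: sum_pi0 pi0_mult_wgt)
    finally show
      "(\<Sum>a\<in>UNIV. pi0 x a * (\<integral>lc. dr_term (x, a, lc) - ?V (fst (x, a, lc)) \<partial>K x a)) = 0" .
  qed
  then show ?thesis
    using integrable V by simp
qed

end

theorem theorem1:
  fixes p :: "'x measure"
    and pi0 pie pi0h :: "'x \<Rightarrow> 'a::finite \<Rightarrow> real"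
    and K :: "'x \<Rightarrow> 'a \<Rightarrow> (real \<times> real) measure"
    and Gh :: "real \<Rightarrow> 'x \<Rightarrow> 'a \<Rightarrow> real"
    and Sh :: "'x \<Rightarrow> 'a \<Rightarrow> real \<Rightarrow> real"
    and n :: nat and t :: real
  assumes p_prob: "prob_space p"
    and pi0_policy: "is_policy p pi0"
    and pie_policy: "is_policy p pie"
    and K_kernel: "(\<lambda>(x, a). K x a) \<in> measurable (p \<Otimes>\<^sub>M count_space UNIV) (prob_algebra borel)"
    and n_pos: "n > 0"
    and t_nonneg: "t \<ge> 0"
    and support: "\<forall>x\<in>space p. \<forall>a. pie x a > 0 \<longrightarrow> pi0 x a > 0"
    and cond_indep: "\<forall>x\<in>space p. \<forall>a. \<forall>A\<in>sets borel. \<forall>B\<in>sets borel.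
         measure (K x a) (A \<times> B) = measure (K x a) (A \<times> UNIV) * measure (K x a) (UNIV \<times> B)"
    and models_pos: "\<forall>x\<in>space p. \<forall>a. pie x a > 0 \<longrightarrow> Gh t x a > 0 \<and> pi0h x a > 0"
    and cens_correct: "\<forall>x\<in>space p. \<forall>a. Gh t x a = cens_surv K t x a"
  shows
    "((\<forall>x\<in>space p. \<forall>a. pi0h x a = pi0 x a) \<longrightarrow>
       (\<integral>D. V_ipcw_ips n pie pi0h Gh t (\<lambda>i. observe (D i)) \<partial>data_dist n (gen_dist p pi0 K))
         = policy_value p pie K t) \<and>
     (((\<forall>x\<in>space p. \<forall>a. pi0h x a = pi0 x a) \<or> (\<forall>x\<in>space p. \<forall>a. Sh x a t = surv K x a t)) \<longrightarrow>
     integrable (data_dist n (gen_dist p pi0 K)) (\<lambda>D. V_ipcw_dr n pie pi0h Gh Sh t (\<lambda>i. observe (D i))) \<longrightarrow>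
       (\<integral>D. V_ipcw_dr n pie pi0h Gh Sh t (\<lambda>i. observe (D i)) \<partial>data_dist n (gen_dist p pi0 K))
         = policy_value p pie K t)"
proof -
  interpret ipcw_model p pi0 K pie pi0h Gh Sh t
    by (intro ipcw_model.intro logging_model.intro ipcw_model_axioms.intro
        p_prob pi0_policy K_kernel pie_policy support cond_indep models_pos cens_correct)
  show ?thesis
  proof (intro conjI impI)
    assume "\<forall>x\<in>space p. \<forall>a. pi0h x a = pi0 x a"
    note ips = ips_term_unbiased[OF this]
    show "(\<integral>D. V_ipcw_ips n pie pi0h Gh t (\<lambda>i. observe (D i)) \<partial>data_dist n P) = policy_value p pie K t"
      unfolding V_ipcw_ips_observe data_dist_def
        integral_sample_mean_PiM[OF prob_space_gen_dist ips(1) n_pos]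
      by (rule ips(2))
  next
    assume model_correct:
        "(\<forall>x\<in>space p. \<forall>a. pi0h x a = pi0 x a) \<or> (\<forall>x\<in>space p. \<forall>a. Sh x a t = S x a)"
      and "integrable (data_dist n P) (\<lambda>D. V_ipcw_dr n pie pi0h Gh Sh t (\<lambda>i. observe (D i)))"
    from this(2) have dr: "integrable P dr_term"
      unfolding V_ipcw_dr_observe data_dist_def
      by (rule integrable_of_integrable_sample_mean_PiM[OF prob_space_gen_dist n_pos])
    show "(\<integral>D. V_ipcw_dr n pie pi0h Gh Sh t (\<lambda>i. observe (D i)) \<partial>data_dist n P) = policy_value p pie K t"
      unfolding V_ipcw_dr_observe data_dist_def
        integral_sample_mean_PiM[OF prob_space_gen_dist dr n_pos]
      by (rule dr_term_unbiased[OF model_correct dr])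
  qed
qed

end
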